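(* Fix an integer $r>0$ and let $\preccurlyeq$ be the relation on $\mathcal A$ defined below. Then: (a) $\preccurlyeq$ is a preorder (reflexive and transitive) on $\mathcal A$; (b) for $\mathbf a,\mathbf b\in\mathcal A$, both $\mathbf a\preccurlyeq\mathbf b$ and $\mathbf b\preccurlyeq\mathbf a$ hold if and only if $\dim\mathbf a=\dim\mathbf b$ and $a_i=b_i$ for all $0\le i\le\dim\mathbf a-r$; (c) for $0\le m<\infty$, an element $\mathbf b\in\mathcal A_m$ is a least element of $\mathcal A_m$ if and only if $\dim\mathbf b=m$ and $b_i=2$ for $0\le i\le m-r$; and $\mathbf b\in\mathcal A_\infty$ is a least element of $\mathcal A_\infty$ if and only if $b_i=2$ for all $i\ge0$.
   Context: Let $\mathcal A$ be the set of sequences $\mathbf a=(a_n)_{n\in\mathbb N}$ of nonnegative integers with $a_0>0$ such that for every $n$, if $a_n\le1$ then $a_i=0$ for all $i>n$. For $\mathbf a\in\mathcal A$ put $\dim\mathbf a=\sup\{n: a_n>0\}\in\mathbb N\cup\{\infty\}$; for $0\le m<\infty$ let $\mathcal A_m=\{\mathbf a\in\mathcal A:\dim\mathbf a\ge m\}$ and $\mathcal A_\infty=\bigcap_m\mathcal A_m$. For fixed $r>0$, define $\mathbf a\preccurlyeq\mathbf b$ iff $\dim\mathbf a\le\dim\mathbf b$ and, for every $n\in\mathbb N$, $a_n>b_n$ implies $\dim\mathbf a<n+r$ (where $\infty<n+r$ is false). An element $x$ of a subset $B$ is a least element of $B$ if $x\preccurlyeq b$ for all $b\in B$. *)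

theory Defs
  imports Main "HOL-Library.Extended_Nat"
begin

definition seqA :: "(nat \<Rightarrow> nat) set" where
  "seqA = {a. a 0 > 0 \<and> (\<forall>n. a n \<le> 1 \<longrightarrow> (\<forall>i>n. a i = 0))}"

definition dimA :: "(nat \<Rightarrow> nat) \<Rightarrow> enat" where
  "dimA a = Sup (enat ` {n. a n > 0})"

definition seqA_m :: "nat \<Rightarrow> (nat \<Rightarrow> nat) set" where
  "seqA_m m = {a \<in> seqA. dimA a \<ge> enat m}"

definition seqA_inf :: "(nat \<Rightarrow> nat) set" where
  "seqA_inf = (\<Inter>m. seqA_m m)"

text \<open>The relation a \<preccurlyeq> b for parameter r; note infinity < enat k is false.\<close>
definition precA :: "nat \<Rightarrow> (nat \<Rightarrow> nat) \<Rightarrow> (nat \<Rightarrow> nat) \<Rightarrow> bool" where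
  "precA r a b \<longleftrightarrow> dimA a \<le> dimA b \<and> (\<forall>n. a n > b n \<longrightarrow> dimA a < enat (n + r))"

definition precA_rel :: "nat \<Rightarrow> ((nat \<Rightarrow> nat) \<times> (nat \<Rightarrow> nat)) set" where
  "precA_rel r = {(a, b). a \<in> seqA \<and> b \<in> seqA \<and> precA r a b}"

definition least_elem :: "nat \<Rightarrow> (nat \<Rightarrow> nat) set \<Rightarrow> (nat \<Rightarrow> nat) \<Rightarrow> bool" where
  "least_elem r B x \<longleftrightarrow> x \<in> B \<and> (\<forall>b\<in>B. precA r x b)"

end

theory Submission
  imports Defs
begin

text \<open>Read contrapositively, \<open>a \<preccurlyeq> b\<close> says \<open>dim a \<le> dim b\<close> and \<open>a\<^sub>n \<le> b\<^sub>n\<close> whenever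
  \<open>n + r \<le> dim a\<close>; (a) and (b) are immediate from this form. For (c) the point is that every
  entry of an admissible sequence strictly below its dimension is at least \<open>2\<close>. So the
  constant sequence \<open>2\<close>, and its truncation \<open>2,\<dots>,2,1,0,0,\<dots>\<close> of dimension \<open>m\<close>, lie
  entrywise below every competitor where it matters, and comparing a least element with
  these two sequences forces its entries to be \<open>2\<close>; \<open>r > 0\<close> keeps the entry \<open>1\<close> at
  index \<open>m\<close> out of the comparison.\<close>

lemma precA_iff:
  "precA r a b \<longleftrightarrow> dimA a \<le> dimA b \<and> (\<forall>n. enat (n + r) \<le> dimA a \<longrightarrow> a n \<le> b n)"
  unfolding precA_def by (meson not_le)

lemma precA_trans: "precA r a b \<Longrightarrow> precA r b c \<Longrightarrow> precA r a c"
  unfolding precA_iff by (meson order_trans)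

lemma preorder_on_precA_rel: "preorder_on seqA (precA_rel r)"
  unfolding preorder_on_def
proof (intro conjI)
  show "precA_rel r \<subseteq> seqA \<times> seqA" "refl_on seqA (precA_rel r)"
    unfolding refl_on_def precA_rel_def by (auto simp: precA_def)
  show "trans (precA_rel r)"
    unfolding trans_def precA_rel_def using precA_trans by blast
qed

lemma precA_both_iff:
  "precA r a b \<and> precA r b a \<longleftrightarrow>
     dimA a = dimA b \<and> (\<forall>i. enat (i + r) \<le> dimA a \<longrightarrow> a i = b i)"
  unfolding precA_iff by (metis order_antisym order_refl)

lemma enat_le_dimA: "0 < a n \<Longrightarrow> enat n \<le> dimA a"
  unfolding dimA_def by (auto intro!: Sup_upper)

lemma dimA_le_enat:
  assumes "a \<in> seqA" "a n \<le> 1"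
  shows "dimA a \<le> enat n"
proof -
  have "\<forall>i>n. a i = 0" using assms unfolding seqA_def by auto
  then have "i \<le> n" if "0 < a i" for i
    using that by (metis not_le less_irrefl)
  then show ?thesis unfolding dimA_def by (auto intro!: Sup_least)
qed

lemma two_le_seqA_below_dimA:
  assumes "a \<in> seqA" "enat n < dimA a"
  shows "2 \<le> a n"
proof (rule ccontr)
  assume "\<not> 2 \<le> a n"
  then have "dimA a \<le> enat n" using dimA_le_enat[OF assms(1)] by simp
  with assms(2) show False by simp
qed

lemma seqA_inf_iff: "b \<in> seqA_inf \<longleftrightarrow> b \<in> seqA \<and> dimA b = \<infinity>"
proof -
  have "d = \<infinity>" if "\<forall>m. enat m \<le> d" for d :: enat
  proof (cases d)
    case (enat k)
    with that[rule_format, of "Suc k"] show ?thesis by simp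
  qed
  then show ?thesis
    unfolding seqA_inf_def seqA_m_def by auto
qed

definition stair :: "nat \<Rightarrow> nat \<Rightarrow> nat" where
  "stair m i = (if i < m then 2 else if i = m then 1 else 0)"

lemma stair_in_seqA: "stair m \<in> seqA"
  unfolding seqA_def stair_def by auto

lemma dimA_stair: "dimA (stair m) = enat m"
proof (rule order_antisym)
  show "dimA (stair m) \<le> enat m"
    by (rule dimA_le_enat[OF stair_in_seqA]) (simp add: stair_def)
  show "enat m \<le> dimA (stair m)"
    by (rule enat_le_dimA) (simp add: stair_def)
qed

lemma stair_in_seqA_m: "stair m \<in> seqA_m m"
  unfolding seqA_m_def by (simp add: stair_in_seqA dimA_stair)

lemma least_elem_seqA_m_iff:
  assumes "0 < r" and b: "b \<in> seqA_m m"
  shows "least_elem r (seqA_m m) b \<longleftrightarrow> dimA b = enat m \<and> (\<forall>i. i + r \<le> m \<longrightarrow> b i = 2)"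
proof
  have bA: "b \<in> seqA" and m_le_b: "enat m \<le> dimA b"
    using b unfolding seqA_m_def by auto
  assume "least_elem r (seqA_m m) b"
  then have b_stair: "precA r b (stair m)"
    using stair_in_seqA_m unfolding least_elem_def by blast
  then have dim_b: "dimA b = enat m"
    using m_le_b by (simp add: precA_iff dimA_stair)
  have "b i = 2" if "i + r \<le> m" for i
  proof -
    have "i < m" using that \<open>0 < r\<close> by simp
    have "b i \<le> stair m i"
      using b_stair that dim_b by (simp add: precA_iff)
    then have "b i \<le> 2"
      using \<open>i < m\<close> by (simp add: stair_def)
    moreover have "2 \<le> b i"
      using two_le_seqA_below_dimA[OF bA] \<open>i < m\<close> dim_b by simp
    ultimately show ?thesis by simp
  qed
  with dim_b show "dimA b = enat m \<and> (\<forall>i. i + r \<le> m \<longrightarrow> b i = 2)" by blast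
next
  assume dim_b: "dimA b = enat m \<and> (\<forall>i. i + r \<le> m \<longrightarrow> b i = 2)"
  have "precA r b c" if "c \<in> seqA_m m" for c
  proof -
    have cA: "c \<in> seqA" and m_le_c: "enat m \<le> dimA c"
      using that unfolding seqA_m_def by auto
    have "b n \<le> c n" if "n + r \<le> m" for n
    proof -
      have "enat n < enat m" using that \<open>0 < r\<close> by simp
      then have "enat n < dimA c" using m_le_c by (rule order_less_le_trans)
      then show ?thesis using two_le_seqA_below_dimA[OF cA] dim_b that by simp
    qed
    then show ?thesis using dim_b m_le_c by (simp add: precA_iff)
  qed
  then show "least_elem r (seqA_m m) b" using b unfolding least_elem_def by blast
qed

lemma least_elem_seqA_inf_iff:
  assumes b: "b \<in> seqA_inf"
  shows "least_elem r seqA_inf b \<longleftrightarrow> (\<forall>i. b i = 2)"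
proof -
  have two_le: "2 \<le> c i" if "c \<in> seqA_inf" for c i
    using that two_le_seqA_below_dimA by (simp add: seqA_inf_iff)
  have const2: "(\<lambda>_. 2) \<in> seqA_inf"
    using enat_le_dimA[of "\<lambda>_. 2"] unfolding seqA_inf_def seqA_m_def seqA_def by simp
  have prec_inf: "precA r b c \<longleftrightarrow> (\<forall>n. b n \<le> c n)" if "c \<in> seqA_inf" for c
    using b that by (simp add: precA_iff seqA_inf_iff)
  show ?thesis
  proof
    assume "least_elem r seqA_inf b"
    then have "b i \<le> 2" for i
      using const2 prec_inf unfolding least_elem_def by blast
    then show "\<forall>i. b i = 2" using two_le[OF b] by (simp add: le_antisym)
  next
    assume "\<forall>i. b i = 2"
    then show "least_elem r seqA_inf b"
      using b prec_inf two_le unfolding least_elem_def by simp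
  qed
qed

theorem proposition1p3:
  fixes r :: nat
  assumes "r > 0"
  shows "preorder_on seqA (precA_rel r)
    \<and> (\<forall>a\<in>seqA. \<forall>b\<in>seqA.
           (precA r a b \<and> precA r b a \<longleftrightarrow>
            dimA a = dimA b \<and> (\<forall>i. enat (i + r) \<le> dimA a \<longrightarrow> a i = b i)))
    \<and> (\<forall>m. \<forall>b\<in>seqA_m m.
           (least_elem r (seqA_m m) b \<longleftrightarrow>
            dimA b = enat m \<and> (\<forall>i. i + r \<le> m \<longrightarrow> b i = 2)))
    \<and> (\<forall>b\<in>seqA_inf. (least_elem r seqA_inf b \<longleftrightarrow> (\<forall>i. b i = 2)))"
  by (simp add: preorder_on_precA_rel precA_both_iff least_elem_seqA_m_iff[OF assms]
      least_elem_seqA_inf_iff)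

end
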